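(* For all (well-formed, possibly open) $\lambda$-terms $t$ and $s$, $t \approx_{\mathrm{nf}} s$ if and only if there exists a natural number $n > \max(\mathrm{fv}(t) \cup \mathrm{fv}(s))$ such that $\langle t, [], n\rangle_{\mathrm{ev}} \approx \langle s, [], n\rangle_{\mathrm{ev}}$, where $\approx$ is machine bisimilarity on configurations of the NFB machine.
   Context: Terms: $t,s ::= f \mid x \mid \lambda x.t \mid t\,s$, where $f$ ranges over free variables, identified with natural numbers, and $x$ over bound variables; terms are well formed (every $x$ is bound by an enclosing $\lambda$); $\mathrm{fv}(t)$ is the set of free variables of $t$. Stacks: $\pi ::= t::\pi \mid []$. KAM transitions (on open terms): $\langle t\,s, \pi\rangle \to \langle t, s :: \pi\rangle$ and $\langle \lambda x.t, s::\pi\rangle \to \langle t\{s/x\}, \pi\rangle$; $\to^*$ is its reflexive transitive closure. A relation $\mathcal{R}$ on terms is extended to stacks by: $\pi_1 \mathcal R \pi_2$ iff $\pi_1=\pi_2=[]$, or $\pi_1 = t::\pi_1'$, $\pi_2 = s::\pi_2'$, $t\mathcal R s$ and $\pi_1'\mathcal R\pi_2'$. Normal-form bisimulation: a symmetric relation $\mathcal{R}$ on terms such that $t \mathcal R s$ implies (1) if $\langle t, []\rangle \to^* \langle \lambda x.t', []\rangle$ then there is $s'$ with $\langle s,[]\rangle \to^* \langle \lambda x.s', []\rangle$ and $t'\{f/x\} \mathcal R s'\{f/x\}$ for a fresh $f$; (2) if $\langle t, []\rangle \to^* \langle f, \pi\rangle$ then there is $\pi'$ with $\langle s,[]\rangle\to^*\langle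 f,\pi'\rangle$ and $\pi\mathcal R\pi'$. Normal-form bisimilarity $\approx_{\mathrm{nf}}$ is the largest normal-form bisimulation. NFB machine: configurations $\langle t,\pi,n\rangle_{\mathrm{ev}}$ and $\langle \pi, n\rangle_{\mathrm{cont}}$ ($n\in\mathbb N$); transitions labelled by $\tau$ or by flags: $\langle t\,s,\pi,n\rangle_{\mathrm{ev}} \xrightarrow{\tau} \langle t, s::\pi, n\rangle_{\mathrm{ev}}$; $\langle \lambda x.t, s::\pi, n\rangle_{\mathrm{ev}} \xrightarrow{\tau} \langle t\{s/x\},\pi,n\rangle_{\mathrm{ev}}$; $\langle \lambda x.t, [], n\rangle_{\mathrm{ev}} \xrightarrow{\lambda} \langle t\{n/x\}, [], n+1\rangle_{\mathrm{ev}}$; $\langle f, \pi, n\rangle_{\mathrm{ev}} \xrightarrow{f} \langle \pi, n\rangle_{\mathrm{cont}}$ (the flag is the natural number $f$); $\langle [], n\rangle_{\mathrm{cont}} \xrightarrow{\mathsf{done}}$ (terminating transition, to no configuration); $\langle t::\pi, n\rangle_{\mathrm{cont}} \xrightarrow{\mathsf{enter}} \langle t, [], n\rangle_{\mathrm{ev}}$; $\langle t::\pi, n\rangle_{\mathrm{cont}} \xrightarrow{\mathsf{skip}} \langle \pi, n\rangle_{\mathrm{cont}}$. Machine bisimulation: a symmetric relation $\mathcal R$ on configurations such that $C_1\mathcal R C_2$ implies, for every flag $F$: (1) if $C_1 \xrightarrow{\tau}^* \xrightarrow{F} C_1'$ then there is $C_2'$ with $C_2 \xrightarrow{\tau}^*\xrightarrow{F}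 C_2'$ and $C_1'\mathcal R C_2'$; (2) if $C_1 \xrightarrow{\tau}^*\xrightarrow{F}$ by a terminating transition then $C_2 \xrightarrow{\tau}^*\xrightarrow{F}$ by a terminating transition. Machine bisimilarity $\approx$ is the largest machine bisimulation. *)

theory Defs
  imports Main
begin

text \<open>Locally nameless lambda-terms: free variables are natural numbers,
  bound variables are de Bruijn indices.\<close>

datatype trm = FVar nat | BVar nat | Lam trm | App trm trm

fun open_rec :: "nat \<Rightarrow> trm \<Rightarrow> trm \<Rightarrow> trm" where
  "open_rec k u (FVar f) = FVar f"
| "open_rec k u (BVar i) = (if i = k then u else BVar i)"
| "open_rec k u (Lam t) = Lam (open_rec (Suc k) u t)"
| "open_rec k u (App t s) = App (open_rec k u t) (open_rec k u s)"

text \<open>For Lam t, the body t with its bound variable replaced by u, i.e. t{u/x}.\<close>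
definition subst_bound :: "trm \<Rightarrow> trm \<Rightarrow> trm" where
  "subst_bound t u = open_rec 0 u t"

fun closed_at :: "nat \<Rightarrow> trm \<Rightarrow> bool" where
  "closed_at k (FVar f) = True"
| "closed_at k (BVar i) = (i < k)"
| "closed_at k (Lam t) = closed_at (Suc k) t"
| "closed_at k (App t s) = (closed_at k t \<and> closed_at k s)"

definition wf_trm :: "trm \<Rightarrow> bool" where
  "wf_trm t = closed_at 0 t"

fun fv :: "trm \<Rightarrow> nat set" where
  "fv (FVar f) = {f}"
| "fv (BVar i) = {}"
| "fv (Lam t) = fv t"
| "fv (App t s) = fv t \<union> fv s"

type_synonym stack = "trm list"

inductive kam_step :: "trm \<times> stack \<Rightarrow> trm \<times> stack \<Rightarrow> bool" where
  push: "kam_step (App t s, \<pi>) (t, s # \<pi>)"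
| beta: "kam_step (Lam t, s # \<pi>) (subst_bound t s, \<pi>)"

abbreviation kam_steps :: "trm \<times> stack \<Rightarrow> trm \<times> stack \<Rightarrow> bool" where
  "kam_steps \<equiv> kam_step\<^sup>*\<^sup>*"

definition nf_bisim :: "(trm \<Rightarrow> trm \<Rightarrow> bool) \<Rightarrow> bool" where
  "nf_bisim R \<longleftrightarrow> symp R \<and>
    (\<forall>t s. R t s \<longrightarrow>
       wf_trm t \<and> wf_trm s \<and>
       (\<forall>t'. kam_steps (t, []) (Lam t', []) \<longrightarrow>
          (\<exists>s'. kam_steps (s, []) (Lam s', []) \<and>
             (\<exists>f. f \<notin> fv t \<union> fv s \<and> R (subst_bound t' (FVar f)) (subst_bound s' (FVar f))))) \<and>
       (\<forall>f \<pi>. kam_steps (t, []) (FVar f, \<pi>) \<longrightarrow>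
          (\<exists>\<pi>'. kam_steps (s, []) (FVar f, \<pi>') \<and> list_all2 R \<pi> \<pi>')))"

definition nf_bisimilar :: "trm \<Rightarrow> trm \<Rightarrow> bool" where
  "nf_bisimilar t s \<longleftrightarrow> (\<exists>R. nf_bisim R \<and> R t s)"

datatype conf = Ev trm stack nat | Cont stack nat

datatype flag = FLam | FVarFlag nat | FDone | FEnter | FSkip

datatype label = Tau | Flag flag

text \<open>Transitions; the target None represents a terminating transition.\<close>
inductive mstep :: "conf \<Rightarrow> label \<Rightarrow> conf option \<Rightarrow> bool" where
  app: "mstep (Ev (App t s) \<pi> n) Tau (Some (Ev t (s # \<pi>) n))"
| beta: "mstep (Ev (Lam t) (s # \<pi>) n) Tau (Some (Ev (subst_bound t s) \<pi> n))"
| mlam: "mstep (Ev (Lam t) [] n) (Flag FLam) (Some (Ev (subst_bound t (FVar n)) [] (Suc n)))"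
| mvar: "mstep (Ev (FVar f) \<pi> n) (Flag (FVarFlag f)) (Some (Cont \<pi> n))"
| mdone: "mstep (Cont [] n) (Flag FDone) None"
| menter: "mstep (Cont (t # \<pi>) n) (Flag FEnter) (Some (Ev t [] n))"
| mskip: "mstep (Cont (t # \<pi>) n) (Flag FSkip) (Some (Cont \<pi> n))"

definition tau_step :: "conf \<Rightarrow> conf \<Rightarrow> bool" where
  "tau_step C C' \<longleftrightarrow> mstep C Tau (Some C')"

definition weak_step :: "conf \<Rightarrow> flag \<Rightarrow> conf option \<Rightarrow> bool" where
  "weak_step C F R \<longleftrightarrow> (\<exists>C0. tau_step\<^sup>*\<^sup>* C C0 \<and> mstep C0 (Flag F) R)"

definition machine_bisim :: "(conf \<Rightarrow> conf \<Rightarrow> bool) \<Rightarrow> bool" where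
  "machine_bisim R \<longleftrightarrow> symp R \<and>
    (\<forall>C1 C2. R C1 C2 \<longrightarrow>
      (\<forall>F. (\<forall>C1'. weak_step C1 F (Some C1') \<longrightarrow>
               (\<exists>C2'. weak_step C2 F (Some C2') \<and> R C1' C2')) \<and>
           (weak_step C1 F None \<longrightarrow> weak_step C2 F None)))"

definition machine_bisimilar :: "conf \<Rightarrow> conf \<Rightarrow> bool" where
  "machine_bisimilar C1 C2 \<longleftrightarrow> (\<exists>R. machine_bisim R \<and> R C1 C2)"

end

theory Submission
  imports Defs "HOL-Combinatorics.Transposition"
begin

text \<open>Both directions are proved by exhibiting a bisimulation.

  From left to right, relate \<open>Ev t [] n\<close> to \<open>Ev s [] n\<close> when \<open>t\<close> and \<open>s\<close>
  are normal-form bisimilar and \<open>n\<close> exceeds all their free variables, and \<open>Cont\<close>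
  configurations whose stacks are pointwise normal-form bisimilar. The machine opens a
  \<open>\<lambda>\<close> with the next unused name \<open>n\<close>, while normal-form bisimilarity only supplies
  some fresh name; since normal-form bisimilarity is invariant under swapping two names,
  every fresh name, in particular \<open>n\<close>, will do.

  From right to left, well-formed terms that are machine bisimilar at some bound on their
  free variables form a normal-form bisimulation: bisimilar \<open>Cont\<close> configurations have
  pointwise bisimilar stacks, as the flags \<open>done\<close>, \<open>enter\<close> and \<open>skip\<close> expose the
  length and every entry of a stack.\<close>

fun rename :: "(nat \<Rightarrow> nat) \<Rightarrow> trm \<Rightarrow> trm" where
  "rename \<sigma> (FVar f) = FVar (\<sigma> f)"
| "rename \<sigma> (BVar i) = BVar i"
| "rename \<sigma> (Lam t) = Lam (rename \<sigma> t)"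
| "rename \<sigma> (App t s) = App (rename \<sigma> t) (rename \<sigma> s)"

lemma rename_open_rec: "rename \<sigma> (open_rec k u t) = open_rec k (rename \<sigma> u) (rename \<sigma> t)"
  by (induction t arbitrary: k) auto

lemma rename_subst_bound: "rename \<sigma> (subst_bound t u) = subst_bound (rename \<sigma> t) (rename \<sigma> u)"
  by (simp add: subst_bound_def rename_open_rec)

lemma rename_id_on_fv: "(\<And>x. x \<in> fv t \<Longrightarrow> \<sigma> x = x) \<Longrightarrow> rename \<sigma> t = t"
  by (induction t) auto

lemma rename_involution: "(\<And>x. \<sigma> (\<sigma> x) = x) \<Longrightarrow> rename \<sigma> (rename \<sigma> t) = t"
  by (induction t) auto

lemma fv_rename: "fv (rename \<sigma> t) = \<sigma> ` fv t"
  by (induction t) auto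

lemma closed_at_rename: "closed_at k (rename \<sigma> t) \<longleftrightarrow> closed_at k t"
  by (induction t arbitrary: k) auto

lemma wf_trm_rename: "wf_trm (rename \<sigma> t) \<longleftrightarrow> wf_trm t"
  by (simp add: wf_trm_def closed_at_rename)

lemma kam_step_rename:
  assumes "kam_step (t, \<pi>) (t', \<pi>')"
  shows "kam_step (rename \<sigma> t, map (rename \<sigma>) \<pi>) (rename \<sigma> t', map (rename \<sigma>) \<pi>')"
  using assms by cases (simp_all add: rename_subst_bound kam_step.intros)

lemma kam_steps_rename:
  "kam_steps (t, \<pi>) (t', \<pi>') \<Longrightarrow>
   kam_steps (rename \<sigma> t, map (rename \<sigma>) \<pi>) (rename \<sigma> t', map (rename \<sigma>) \<pi>')"
proof (induction rule: rtranclp_induct2)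
  case (step t' \<pi>' t'' \<pi>'')
  from step.IH kam_step_rename[OF step.hyps(2)] show ?case
    by (rule rtranclp.rtrancl_into_rtrancl)
qed simp

lemma finite_fv: "finite (fv t)"
  by (induction t) auto

lemma closed_at_mono: "closed_at k u \<Longrightarrow> k \<le> j \<Longrightarrow> closed_at j u"
  by (induction u arbitrary: k j) auto

lemma closed_at_open_rec:
  "closed_at (Suc k) t \<Longrightarrow> closed_at 0 u \<Longrightarrow> closed_at k (open_rec k u t)"
  by (induction t arbitrary: k) (auto intro: closed_at_mono)

lemma wf_trm_subst_bound: "wf_trm (Lam t) \<Longrightarrow> wf_trm u \<Longrightarrow> wf_trm (subst_bound t u)"
  by (simp add: wf_trm_def subst_bound_def closed_at_open_rec)

lemma fv_open_rec: "fv (open_rec k u t) \<subseteq> fv t \<union> fv u"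
  by (induction t arbitrary: k) auto

lemma fv_subst_bound: "fv (subst_bound t u) \<subseteq> fv t \<union> fv u"
  by (simp add: subst_bound_def fv_open_rec)

lemma kam_steps_fv:
  "kam_steps (t, \<pi>) (t', \<pi>') \<Longrightarrow> fv t' \<union> \<Union>(fv ` set \<pi>') \<subseteq> fv t \<union> \<Union>(fv ` set \<pi>)"
proof (induction rule: rtranclp_induct2)
  case (step t' \<pi>' t'' \<pi>'')
  from step.hyps(2) have "fv t'' \<union> \<Union>(fv ` set \<pi>'') \<subseteq> fv t' \<union> \<Union>(fv ` set \<pi>')"
  proof cases
    case (beta t s)
    then show ?thesis using fv_subst_bound[of t s] by auto
  qed auto
  then show ?case using step.IH by (rule subset_trans)
qed simp

lemma kam_steps_wf:
  "kam_steps (t, \<pi>) (t', \<pi>') \<Longrightarrow> wf_trm t \<Longrightarrow> list_all wf_trm \<pi> \<Longrightarrow>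
   wf_trm t' \<and> list_all wf_trm \<pi>'"
proof (induction rule: rtranclp_induct2)
  case (step t' \<pi>' t'' \<pi>'')
  from step.hyps(2) show ?case
  proof cases
    case (push s)
    with step.IH step.prems show ?thesis by (simp add: wf_trm_def)
  next
    case (beta s)
    with step.IH step.prems show ?thesis by (simp add: wf_trm_subst_bound)
  qed
qed simp

lemma kam_steps_Lam_fv:
  "kam_steps (t, []) (Lam t', []) \<Longrightarrow> fv (subst_bound t' (FVar n)) \<subseteq> insert n (fv t)"
  using kam_steps_fv[of t "[]" "Lam t'" "[]"] fv_subst_bound[of t' "FVar n"] by auto

lemma kam_steps_Lam_wf:
  "kam_steps (t, []) (Lam t', []) \<Longrightarrow> wf_trm t \<Longrightarrow> wf_trm (subst_bound t' (FVar n))"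
  using kam_steps_wf[of t "[]" "Lam t'" "[]"] wf_trm_subst_bound[of t' "FVar n"]
  by (simp add: wf_trm_def)

lemma tau_step_Ev_iff:
  "tau_step (Ev t \<pi> n) C \<longleftrightarrow> (\<exists>t' \<pi>'. C = Ev t' \<pi>' n \<and> kam_step (t, \<pi>) (t', \<pi>'))"
  by (auto simp: tau_step_def mstep.simps kam_step.simps)

lemma tau_steps_Ev_iff:
  "tau_step\<^sup>*\<^sup>* (Ev t \<pi> n) C \<longleftrightarrow> (\<exists>t' \<pi>'. C = Ev t' \<pi>' n \<and> kam_steps (t, \<pi>) (t', \<pi>'))"
proof
  assume "tau_step\<^sup>*\<^sup>* (Ev t \<pi> n) C"
  then show "\<exists>t' \<pi>'. C = Ev t' \<pi>' n \<and> kam_steps (t, \<pi>) (t', \<pi>')"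
    by (induction rule: rtranclp_induct) (auto simp: tau_step_Ev_iff)
next
  assume "\<exists>t' \<pi>'. C = Ev t' \<pi>' n \<and> kam_steps (t, \<pi>) (t', \<pi>')"
  then obtain t' \<pi>' where "C = Ev t' \<pi>' n" and "kam_steps (t, \<pi>) (t', \<pi>')" by blast
  from this(2) show "tau_step\<^sup>*\<^sup>* (Ev t \<pi> n) C" unfolding \<open>C = Ev t' \<pi>' n\<close>
    by (induction rule: rtranclp_induct2) (auto simp: tau_step_Ev_iff elim: rtranclp.rtrancl_into_rtrancl)
qed

lemma tau_steps_Cont: "tau_step\<^sup>*\<^sup>* (Cont \<pi> n) C \<longleftrightarrow> C = Cont \<pi> n"
  by (auto simp: tau_step_def mstep.simps elim: converse_rtranclpE)

lemma weak_step_Ev_Nil_iff: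
  "weak_step (Ev t [] n) F R \<longleftrightarrow>
     (\<exists>t'. kam_steps (t, []) (Lam t', []) \<and> F = FLam \<and>
        R = Some (Ev (subst_bound t' (FVar n)) [] (Suc n))) \<or>
     (\<exists>f \<pi>. kam_steps (t, []) (FVar f, \<pi>) \<and> F = FVarFlag f \<and> R = Some (Cont \<pi> n))"
  by (fastforce simp: weak_step_def tau_steps_Ev_iff mstep.simps)

lemma weak_step_Cont_iff:
  "weak_step (Cont \<pi> n) F R \<longleftrightarrow>
     (\<pi> = [] \<and> F = FDone \<and> R = None) \<or>
     (\<exists>u \<pi>'. \<pi> = u # \<pi>' \<and>
        (F = FEnter \<and> R = Some (Ev u [] n) \<or> F = FSkip \<and> R = Some (Cont \<pi>' n)))"
  by (auto simp: weak_step_def tau_steps_Cont mstep.simps)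

lemma nf_bisimI:
  assumes "symp R"
    and "\<And>t s. R t s \<Longrightarrow> wf_trm t \<and> wf_trm s"
    and "\<And>t s t'. R t s \<Longrightarrow> kam_steps (t, []) (Lam t', []) \<Longrightarrow>
           \<exists>s' f. kam_steps (s, []) (Lam s', []) \<and> f \<notin> fv t \<union> fv s \<and>
             R (subst_bound t' (FVar f)) (subst_bound s' (FVar f))"
    and "\<And>t s f \<pi>. R t s \<Longrightarrow> kam_steps (t, []) (FVar f, \<pi>) \<Longrightarrow>
           \<exists>\<pi>'. kam_steps (s, []) (FVar f, \<pi>') \<and> list_all2 R \<pi> \<pi>'"
  shows "nf_bisim R"
  using assms unfolding nf_bisim_def by blast

lemma nf_bisimD:
  assumes "nf_bisim R" and "R t s"
  shows "R s t" and "wf_trm t" and "wf_trm s"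
    and "kam_steps (t, []) (Lam t', []) \<Longrightarrow>
           \<exists>s'. kam_steps (s, []) (Lam s', []) \<and>
             (\<exists>f. f \<notin> fv t \<union> fv s \<and> R (subst_bound t' (FVar f)) (subst_bound s' (FVar f)))"
    and "kam_steps (t, []) (FVar f, \<pi>) \<Longrightarrow>
           \<exists>\<pi>'. kam_steps (s, []) (FVar f, \<pi>') \<and> list_all2 R \<pi> \<pi>'"
  using assms unfolding nf_bisim_def by (simp_all add: sympD)

lemma nf_bisimilarI: "nf_bisim R \<Longrightarrow> R t s \<Longrightarrow> nf_bisimilar t s"
  unfolding nf_bisimilar_def by blast

lemma nf_bisimilar_sym: "nf_bisimilar t s \<Longrightarrow> nf_bisimilar s t"
  unfolding nf_bisimilar_def by (metis nf_bisimD(1))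

lemma nf_bisimilar_wf: "nf_bisimilar t s \<Longrightarrow> wf_trm t \<and> wf_trm s"
  unfolding nf_bisimilar_def by (metis nf_bisimD(2,3))

lemma nf_bisimilar_Lam:
  assumes "nf_bisimilar t s" and "kam_steps (t, []) (Lam t', [])"
  obtains s' f where "kam_steps (s, []) (Lam s', [])" and "f \<notin> fv t \<union> fv s"
    and "nf_bisimilar (subst_bound t' (FVar f)) (subst_bound s' (FVar f))"
proof -
  from assms(1) obtain R where R: "nf_bisim R" "R t s" unfolding nf_bisimilar_def by blast
  from nf_bisimD(4)[OF R assms(2)] obtain s' f where "kam_steps (s, []) (Lam s', [])"
    and "f \<notin> fv t \<union> fv s" and "R (subst_bound t' (FVar f)) (subst_bound s' (FVar f))"
    by blast
  with R(1) show thesis by (blast intro: that nf_bisimilarI)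
qed

lemma nf_bisimilar_FVar:
  assumes "nf_bisimilar t s" and "kam_steps (t, []) (FVar f, \<pi>)"
  obtains \<pi>' where "kam_steps (s, []) (FVar f, \<pi>')" and "list_all2 nf_bisimilar \<pi> \<pi>'"
proof -
  from assms(1) obtain R where R: "nf_bisim R" "R t s" unfolding nf_bisimilar_def by blast
  from nf_bisimD(5)[OF R assms(2)] obtain \<pi>' where "kam_steps (s, []) (FVar f, \<pi>')"
    and "list_all2 R \<pi> \<pi>'" by blast
  with R(1) show thesis by (blast intro: that list_all2_mono nf_bisimilarI)
qed

lemma machine_bisimI:
  assumes "symp R"
    and "\<And>C1 C2 F C1'. R C1 C2 \<Longrightarrow> weak_step C1 F (Some C1') \<Longrightarrow>
           \<exists>C2'. weak_step C2 F (Some C2') \<and> R C1' C2'"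
    and "\<And>C1 C2 F. R C1 C2 \<Longrightarrow> weak_step C1 F None \<Longrightarrow> weak_step C2 F None"
  shows "machine_bisim R"
  using assms unfolding machine_bisim_def by blast

lemma machine_bisimilar_sym: "machine_bisimilar C1 C2 \<Longrightarrow> machine_bisimilar C2 C1"
  unfolding machine_bisimilar_def machine_bisim_def by (blast dest: sympD)

lemma machine_bisimilar_weak_step:
  assumes "machine_bisimilar C1 C2" and "weak_step C1 F (Some C1')"
  obtains C2' where "weak_step C2 F (Some C2')" and "machine_bisimilar C1' C2'"
  using assms unfolding machine_bisimilar_def machine_bisim_def by blast

lemma machine_bisimilar_weak_step_None:
  "machine_bisimilar C1 C2 \<Longrightarrow> weak_step C1 F None \<Longrightarrow> weak_step C2 F None"
  unfolding machine_bisimilar_def machine_bisim_def by blast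

lemma nf_bisimilar_rename:
  assumes involution: "\<And>x. \<sigma> (\<sigma> x) = x" and "nf_bisimilar t s"
  shows "nf_bisimilar (rename \<sigma> t) (rename \<sigma> s)"
proof -
  have rename_twice [simp]: "rename \<sigma> (rename \<sigma> u) = u" for u
    using involution by (rule rename_involution)
  define R where "R a b \<longleftrightarrow> nf_bisimilar (rename \<sigma> a) (rename \<sigma> b)" for a b
  have "nf_bisim R"
  proof (rule nf_bisimI)
    show "symp R"
      by (auto simp: R_def symp_def intro: nf_bisimilar_sym)
    show "wf_trm a \<and> wf_trm b" if "R a b" for a b
      using nf_bisimilar_wf[of "rename \<sigma> a" "rename \<sigma> b"] that by (simp add: R_def wf_trm_rename)
    show "\<exists>b' f. kam_steps (b, []) (Lam b', []) \<and> f \<notin> fv a \<union> fv b \<and>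
            R (subst_bound a' (FVar f)) (subst_bound b' (FVar f))"
      if "R a b" and "kam_steps (a, []) (Lam a', [])" for a b a'
    proof -
      from kam_steps_rename[OF that(2), of \<sigma>]
      have "kam_steps (rename \<sigma> a, []) (Lam (rename \<sigma> a'), [])" by simp
      with that(1) obtain s' f where s': "kam_steps (rename \<sigma> b, []) (Lam s', [])"
        and "f \<notin> fv (rename \<sigma> a) \<union> fv (rename \<sigma> b)"
        and "nf_bisimilar (subst_bound (rename \<sigma> a') (FVar f)) (subst_bound s' (FVar f))"
        unfolding R_def by (rule nf_bisimilar_Lam)
      moreover from kam_steps_rename[OF s', of \<sigma>]
      have "kam_steps (b, []) (Lam (rename \<sigma> s'), [])" by simp
      ultimately show ?thesis
        by (intro exI[of _ "rename \<sigma> s'"] exI[of _ "\<sigma> f"])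
          (auto simp: R_def fv_rename rename_subst_bound involution image_iff)
    qed
    show "\<exists>\<pi>'. kam_steps (b, []) (FVar f, \<pi>') \<and> list_all2 R \<pi> \<pi>'"
      if "R a b" and "kam_steps (a, []) (FVar f, \<pi>)" for a b f \<pi>
    proof -
      from kam_steps_rename[OF that(2), of \<sigma>]
      have "kam_steps (rename \<sigma> a, []) (FVar (\<sigma> f), map (rename \<sigma>) \<pi>)" by simp
      with that(1) obtain \<pi>' where \<pi>': "kam_steps (rename \<sigma> b, []) (FVar (\<sigma> f), \<pi>')"
        and "list_all2 nf_bisimilar (map (rename \<sigma>) \<pi>) \<pi>'"
        unfolding R_def by (rule nf_bisimilar_FVar)
      moreover from kam_steps_rename[OF \<pi>', of \<sigma>]
      have "kam_steps (b, []) (FVar f, map (rename \<sigma>) \<pi>')" by (simp add: involution comp_def)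
      ultimately show ?thesis
        by (auto simp: R_def list_all2_map1 list_all2_map2)
    qed
  qed
  moreover have "R (rename \<sigma> t) (rename \<sigma> s)"
    using assms(2) by (simp add: R_def)
  ultimately show ?thesis by (rule nf_bisimilarI)
qed

lemma nf_bisimilar_Lam_fresh:
  assumes "nf_bisimilar t s" and "kam_steps (t, []) (Lam t', [])"
  obtains s' where "kam_steps (s, []) (Lam s', [])"
    and "\<And>g. g \<notin> fv t \<union> fv s \<Longrightarrow>
           nf_bisimilar (subst_bound t' (FVar g)) (subst_bound s' (FVar g))"
proof -
  from assms obtain s' f where s': "kam_steps (s, []) (Lam s', [])"
    and f: "f \<notin> fv t \<union> fv s"
    and bisim_f: "nf_bisimilar (subst_bound t' (FVar f)) (subst_bound s' (FVar f))"
    by (rule nf_bisimilar_Lam)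
  have "nf_bisimilar (subst_bound t' (FVar g)) (subst_bound s' (FVar g))"
    if g: "g \<notin> fv t \<union> fv s" for g
  proof -
    have "fv t' \<subseteq> fv t" "fv s' \<subseteq> fv s"
      using kam_steps_fv[OF assms(2)] kam_steps_fv[OF s'] by simp_all
    with f g have "rename (transpose f g) t' = t'" "rename (transpose f g) s' = s'"
      by (auto intro!: rename_id_on_fv transpose_apply_other)
    with nf_bisimilar_rename[of "transpose f g", OF _ bisim_f] show ?thesis
      by (simp add: rename_subst_bound)
  qed
  with s' show thesis by (rule that)
qed

inductive nf_bisimilar_conf :: "conf \<Rightarrow> conf \<Rightarrow> bool" where
  Ev: "nf_bisimilar t s \<Longrightarrow> \<forall>f \<in> fv t \<union> fv s. f < n \<Longrightarrow>
    nf_bisimilar_conf (Ev t [] n) (Ev s [] n)"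
| Cont: "list_all2 nf_bisimilar \<pi> \<pi>' \<Longrightarrow> \<forall>u \<in> set \<pi> \<union> set \<pi>'. \<forall>f \<in> fv u. f < n \<Longrightarrow>
    nf_bisimilar_conf (Cont \<pi> n) (Cont \<pi>' n)"

lemma symp_nf_bisimilar_conf: "symp nf_bisimilar_conf"
proof (rule sympI)
  fix C1 C2
  assume "nf_bisimilar_conf C1 C2"
  then show "nf_bisimilar_conf C2 C1"
  proof cases
    case (Ev t s n)
    then show ?thesis by (auto intro!: nf_bisimilar_conf.Ev nf_bisimilar_sym)
  next
    case (Cont \<pi> \<pi>' n)
    then have "list_all2 nf_bisimilar \<pi>' \<pi>"
      by (simp add: list_all2_conv_all_nth nf_bisimilar_sym)
    with Cont show ?thesis by (auto intro!: nf_bisimilar_conf.Cont)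
  qed
qed

lemma nf_bisimilar_conf_Ev_simulation:
  assumes bisim: "nf_bisimilar t s" and bound: "\<forall>f \<in> fv t \<union> fv s. f < n"
    and step: "weak_step (Ev t [] n) F (Some C1)"
  shows "\<exists>C2. weak_step (Ev s [] n) F (Some C2) \<and> nf_bisimilar_conf C1 C2"
proof -
  from step consider
      (Lam) t' where "kam_steps (t, []) (Lam t', [])" and "F = FLam"
        and "C1 = Ev (subst_bound t' (FVar n)) [] (Suc n)"
    | (FVar) f \<pi> where "kam_steps (t, []) (FVar f, \<pi>)" and "F = FVarFlag f" and "C1 = Cont \<pi> n"
    unfolding weak_step_Ev_Nil_iff by blast
  then show ?thesis
  proof cases
    case (Lam t')
    obtain s' where s': "kam_steps (s, []) (Lam s', [])"
      and fresh: "\<And>g. g \<notin> fv t \<union> fv s \<Longrightarrow>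
        nf_bisimilar (subst_bound t' (FVar g)) (subst_bound s' (FVar g))"
      using nf_bisimilar_Lam_fresh[OF bisim Lam(1)] by blast
    from bound kam_steps_Lam_fv[OF Lam(1), of n] kam_steps_Lam_fv[OF s', of n]
    have "\<forall>f \<in> fv (subst_bound t' (FVar n)) \<union> fv (subst_bound s' (FVar n)). f < Suc n"
      by (auto simp: less_Suc_eq subset_iff)
    moreover have "nf_bisimilar (subst_bound t' (FVar n)) (subst_bound s' (FVar n))"
      using bound by (intro fresh) auto
    ultimately show ?thesis
      using s' Lam by (auto simp: weak_step_Ev_Nil_iff intro: nf_bisimilar_conf.Ev)
  next
    case (FVar f \<pi>)
    from bisim FVar(1) obtain \<pi>' where s': "kam_steps (s, []) (FVar f, \<pi>')"
      and stacks: "list_all2 nf_bisimilar \<pi> \<pi>'"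
      by (rule nf_bisimilar_FVar)
    have "\<Union>(fv ` set \<pi>) \<subseteq> fv t" and "\<Union>(fv ` set \<pi>') \<subseteq> fv s"
      using kam_steps_fv[OF FVar(1)] kam_steps_fv[OF s'] by auto
    with bound have "\<forall>u \<in> set \<pi> \<union> set \<pi>'. \<forall>f \<in> fv u. f < n"
      by blast
    with stacks s' FVar show ?thesis
      by (auto simp: weak_step_Ev_Nil_iff intro: nf_bisimilar_conf.Cont)
  qed
qed

lemma nf_bisimilar_conf_Cont_simulation:
  assumes bisim: "list_all2 nf_bisimilar \<pi>1 \<pi>2"
    and bound: "\<forall>u \<in> set \<pi>1 \<union> set \<pi>2. \<forall>f \<in> fv u. f < n"
    and step: "weak_step (Cont \<pi>1 n) F (Some C1)"
  shows "\<exists>C2. weak_step (Cont \<pi>2 n) F (Some C2) \<and> nf_bisimilar_conf C1 C2"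
proof -
  from step obtain u1 \<rho>1 where \<pi>1: "\<pi>1 = u1 # \<rho>1"
    and F: "F = FEnter \<and> C1 = Ev u1 [] n \<or> F = FSkip \<and> C1 = Cont \<rho>1 n"
    unfolding weak_step_Cont_iff by blast
  from bisim \<pi>1 obtain u2 \<rho>2 where \<pi>2: "\<pi>2 = u2 # \<rho>2"
    and "nf_bisimilar u1 u2" and "list_all2 nf_bisimilar \<rho>1 \<rho>2"
    by (cases \<pi>2) auto
  with bound \<pi>1 have "nf_bisimilar_conf (Ev u1 [] n) (Ev u2 [] n)"
    and "nf_bisimilar_conf (Cont \<rho>1 n) (Cont \<rho>2 n)"
    by (auto intro!: nf_bisimilar_conf.intros)
  with F show ?thesis
    unfolding \<pi>2 weak_step_Cont_iff by blast
qed

lemma machine_bisim_nf_bisimilar_conf: "machine_bisim nf_bisimilar_conf"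
proof (rule machine_bisimI[OF symp_nf_bisimilar_conf])
  fix C1 C2 F
  assume rel: "nf_bisimilar_conf C1 C2"
  show "\<exists>C2'. weak_step C2 F (Some C2') \<and> nf_bisimilar_conf C1' C2'"
    if "weak_step C1 F (Some C1')" for C1'
    using rel
  proof cases
    case (Ev t s n)
    with that show ?thesis by (simp add: nf_bisimilar_conf_Ev_simulation)
  next
    case (Cont \<pi> \<pi>' n)
    with that show ?thesis by (simp add: nf_bisimilar_conf_Cont_simulation)
  qed
  show "weak_step C2 F None" if "weak_step C1 F None"
    using rel
  proof cases
    case (Ev t s n)
    with that show ?thesis by (simp add: weak_step_Ev_Nil_iff)
  next
    case (Cont \<pi> \<pi>' n)
    with that show ?thesis by (auto simp: weak_step_Cont_iff)
  qed
qed

lemma nf_bisimilar_imp_machine_bisimilar: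
  assumes "nf_bisimilar t s" and "\<forall>f \<in> fv t \<union> fv s. f < n"
  shows "machine_bisimilar (Ev t [] n) (Ev s [] n)"
  unfolding machine_bisimilar_def
  using machine_bisim_nf_bisimilar_conf nf_bisimilar_conf.Ev[OF assms] by blast

definition machine_bisimilar_trm :: "trm \<Rightarrow> trm \<Rightarrow> bool" where
  "machine_bisimilar_trm t s \<longleftrightarrow> wf_trm t \<and> wf_trm s \<and>
     (\<exists>n. (\<forall>f \<in> fv t \<union> fv s. f < n) \<and> machine_bisimilar (Ev t [] n) (Ev s [] n))"

lemma machine_bisimilar_Cont_list_all2:
  assumes "machine_bisimilar (Cont \<pi>1 n) (Cont \<pi>2 n)"
    and "\<forall>u \<in> set \<pi>1 \<union> set \<pi>2. wf_trm u \<and> (\<forall>f \<in> fv u. f < n)"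
  shows "list_all2 machine_bisimilar_trm \<pi>1 \<pi>2"
  using assms
proof (induction \<pi>1 arbitrary: \<pi>2)
  case Nil
  have "weak_step (Cont [] n) FDone None" by (simp add: weak_step_Cont_iff)
  with Nil.prems(1) have "weak_step (Cont \<pi>2 n) FDone None"
    by (rule machine_bisimilar_weak_step_None)
  then show ?case by (simp add: weak_step_Cont_iff)
next
  case (Cons u1 \<rho>1)
  have "weak_step (Cont (u1 # \<rho>1) n) FEnter (Some (Ev u1 [] n))"
    by (simp add: weak_step_Cont_iff)
  with Cons.prems(1) obtain C where "weak_step (Cont \<pi>2 n) FEnter (Some C)"
    and head: "machine_bisimilar (Ev u1 [] n) C"
    by (rule machine_bisimilar_weak_step)
  then obtain u2 \<rho>2 where \<pi>2: "\<pi>2 = u2 # \<rho>2" and "C = Ev u2 [] n"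
    by (auto simp: weak_step_Cont_iff)
  have "weak_step (Cont (u1 # \<rho>1) n) FSkip (Some (Cont \<rho>1 n))"
    by (simp add: weak_step_Cont_iff)
  with Cons.prems(1) obtain D where "weak_step (Cont \<pi>2 n) FSkip (Some D)"
    and tail: "machine_bisimilar (Cont \<rho>1 n) D"
    by (rule machine_bisimilar_weak_step)
  then have "D = Cont \<rho>2 n" by (simp add: \<pi>2 weak_step_Cont_iff)
  with tail Cons.prems(2) \<pi>2 have "list_all2 machine_bisimilar_trm \<rho>1 \<rho>2"
    by (intro Cons.IH) auto
  moreover have "machine_bisimilar_trm u1 u2"
    unfolding machine_bisimilar_trm_def using head \<open>C = Ev u2 [] n\<close> Cons.prems(2) \<pi>2 by auto
  ultimately show ?case by (simp add: \<pi>2)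
qed

lemma nf_bisim_machine_bisimilar_trm: "nf_bisim machine_bisimilar_trm"
proof (rule nf_bisimI)
  show "symp machine_bisimilar_trm"
    unfolding machine_bisimilar_trm_def by (rule sympI) (blast intro: machine_bisimilar_sym)
  show "wf_trm t \<and> wf_trm s" if "machine_bisimilar_trm t s" for t s
    using that by (simp add: machine_bisimilar_trm_def)
next
  fix t s
  assume "machine_bisimilar_trm t s"
  then obtain n where wf: "wf_trm t" "wf_trm s" and bound: "\<forall>f \<in> fv t \<union> fv s. f < n"
    and bisim: "machine_bisimilar (Ev t [] n) (Ev s [] n)"
    unfolding machine_bisimilar_trm_def by blast
  show "\<exists>s' f. kam_steps (s, []) (Lam s', []) \<and> f \<notin> fv t \<union> fv s \<and>
          machine_bisimilar_trm (subst_bound t' (FVar f)) (subst_bound s' (FVar f))"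
    if t': "kam_steps (t, []) (Lam t', [])" for t'
  proof -
    from t' have "weak_step (Ev t [] n) FLam (Some (Ev (subst_bound t' (FVar n)) [] (Suc n)))"
      unfolding weak_step_Ev_Nil_iff by blast
    with bisim obtain C where "weak_step (Ev s [] n) FLam (Some C)"
      and C: "machine_bisimilar (Ev (subst_bound t' (FVar n)) [] (Suc n)) C"
      by (rule machine_bisimilar_weak_step)
    then obtain s' where s': "kam_steps (s, []) (Lam s', [])"
      and "C = Ev (subst_bound s' (FVar n)) [] (Suc n)"
      by (auto simp: weak_step_Ev_Nil_iff)
    moreover from bound kam_steps_Lam_fv[OF t', of n] kam_steps_Lam_fv[OF s', of n]
    have "\<forall>f \<in> fv (subst_bound t' (FVar n)) \<union> fv (subst_bound s' (FVar n)). f < Suc n"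
      by (auto simp: less_Suc_eq subset_iff)
    moreover have "n \<notin> fv t \<union> fv s" using bound by blast
    ultimately show ?thesis
      using C wf kam_steps_Lam_wf[OF t'] kam_steps_Lam_wf[OF s']
      unfolding machine_bisimilar_trm_def by blast
  qed
  show "\<exists>\<pi>'. kam_steps (s, []) (FVar f, \<pi>') \<and> list_all2 machine_bisimilar_trm \<pi> \<pi>'"
    if t': "kam_steps (t, []) (FVar f, \<pi>)" for f \<pi>
  proof -
    from t' have "weak_step (Ev t [] n) (FVarFlag f) (Some (Cont \<pi> n))"
      unfolding weak_step_Ev_Nil_iff by blast
    with bisim obtain C where "weak_step (Ev s [] n) (FVarFlag f) (Some C)"
      and C: "machine_bisimilar (Cont \<pi> n) C"
      by (rule machine_bisimilar_weak_step)
    then obtain \<pi>' where s': "kam_steps (s, []) (FVar f, \<pi>')" and "C = Cont \<pi>' n"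
      by (auto simp: weak_step_Ev_Nil_iff)
    moreover have "\<forall>u \<in> set \<pi> \<union> set \<pi>'. wf_trm u \<and> (\<forall>f \<in> fv u. f < n)"
      using kam_steps_fv[OF t'] kam_steps_fv[OF s'] kam_steps_wf[OF t'] kam_steps_wf[OF s']
        wf bound by (auto simp: list_all_iff)
    ultimately show ?thesis
      using C machine_bisimilar_Cont_list_all2 by blast
  qed
qed

theorem theorem4p5:
  assumes "wf_trm t" and "wf_trm s"
  shows "nf_bisimilar t s \<longleftrightarrow>
         (\<exists>n::nat. (\<forall>f \<in> fv t \<union> fv s. f < n) \<and> machine_bisimilar (Ev t [] n) (Ev s [] n))"
proof
  assume "nf_bisimilar t s"
  moreover obtain n where "\<forall>f \<in> fv t \<union> fv s. f < n"
    using finite_nat_set_iff_bounded finite_fv finite_UnI by meson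
  ultimately show "\<exists>n. (\<forall>f \<in> fv t \<union> fv s. f < n) \<and> machine_bisimilar (Ev t [] n) (Ev s [] n)"
    using nf_bisimilar_imp_machine_bisimilar by blast
next
  assume "\<exists>n. (\<forall>f \<in> fv t \<union> fv s. f < n) \<and> machine_bisimilar (Ev t [] n) (Ev s [] n)"
  with assms have "machine_bisimilar_trm t s"
    by (simp add: machine_bisimilar_trm_def)
  with nf_bisim_machine_bisimilar_trm show "nf_bisimilar t s"
    by (rule nf_bisimilarI)
qed

end
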